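(* Let $X=(X^{(1)},\dots,X^{(p)})\in\mathbb{R}^p$ be a random vector with finite second moments and strictly positive definite covariance matrix, let $\epsilon$ be a random variable with $E(\epsilon)=0$, $\mathrm{var}(\epsilon)=\sigma^2>0$, uncorrelated with $X^{(1)},\dots,X^{(p)}$, and let $Y=\delta+\sum_{j=1}^p\beta_jX^{(j)}+\epsilon$ with $\delta\in\mathbb{R}$, $\beta\in\mathbb{R}^p$. Suppose the distribution of $(X,Y)$ is partially faithful. Then the population PC-simple algorithm identifies the active set: $\mathcal{A}^{[m_{\mathrm{reach}}]}=\mathcal{A}=\{j=1,\dots,p;\ \beta_j\neq 0\}$.
   Context: $\rho(Z^{(1)},Z^{(2)}\mid W)$ denotes the population partial correlation; $X^{(\mathcal{S})}=\{X^{(j)};j\in\mathcal{S}\}$, $\{j\}^C=\{1,\dots,p\}\setminus\{j\}$. Partial faithfulness: for every $j$, if $\rho(Y,X^{(j)}\mid X^{(\mathcal{S})})=0$ for some $\mathcal{S}\subseteq\{j\}^C$ then $\rho(Y,X^{(j)}\mid X^{(\{j\}^C)})=0$. Population PC-simple algorithm: set $m=1$ and $\mathcal{A}^{[1]}=\{j:\mathrm{cor}(Y,X^{(j)})\neq 0\}$. Repeat: $m\leftarrow m+1$, $\mathcal{A}^{[m]}=\{j\in\mathcal{A}^{[m-1]}:\rho(Y,X^{(j)}\mid X^{(\mathcal{S})})\neq 0$ for all $\mathcal{S}\subseteq\mathcal{A}^{[m-1]}\setminus\{j\}$ with $|\mathcal{S}|=m-1\}$; until $|\mathcal{A}^{[m]}|\le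 m$. Define $m_{\mathrm{reach}}=\min\{m:|\mathcal{A}^{[m]}|\le m\}$. *)

theory Defs
  imports "HOL-Probability.Probability"
begin

text \<open>Population covariance and correlation (correlation is 0 if a variance vanishes,
  by the convention x / 0 = 0).\<close>

definition covar :: "'a measure \<Rightarrow> ('a \<Rightarrow> real) \<Rightarrow> ('a \<Rightarrow> real) \<Rightarrow> real" where
  "covar M U V = (\<integral>\<omega>. (U \<omega> - (\<integral>x. U x \<partial>M)) * (V \<omega> - (\<integral>x. V x \<partial>M)) \<partial>M)"

definition corr :: "'a measure \<Rightarrow> ('a \<Rightarrow> real) \<Rightarrow> ('a \<Rightarrow> real) \<Rightarrow> real" where
  "corr M U V = covar M U V / sqrt (covar M U U * covar M V V)"

definition lin_resid :: "'a measure \<Rightarrow> ('a \<Rightarrow> real) \<Rightarrow> (nat \<Rightarrow> 'a \<Rightarrow> real) \<Rightarrow> nat set \<Rightarrow> 'a \<Rightarrow> real" where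
  "lin_resid M Z W S =
    (let ab = (SOME (a, b). \<forall>a' b'.
              (\<integral>\<omega>. (Z \<omega> - a - (\<Sum>k\<in>S. b k * W k \<omega>))\<^sup>2 \<partial>M)
              \<le> (\<integral>\<omega>. (Z \<omega> - a' - (\<Sum>k\<in>S. b' k * W k \<omega>))\<^sup>2 \<partial>M))
     in (\<lambda>\<omega>. Z \<omega> - fst ab - (\<Sum>k\<in>S. snd ab k * W k \<omega>)))"

definition pcor :: "'a measure \<Rightarrow> ('a \<Rightarrow> real) \<Rightarrow> ('a \<Rightarrow> real) \<Rightarrow> (nat \<Rightarrow> 'a \<Rightarrow> real) \<Rightarrow> nat set \<Rightarrow> real" where
  "pcor M Z1 Z2 W S = corr M (lin_resid M Z1 W S) (lin_resid M Z2 W S)"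

definition partially_faithful :: "'a measure \<Rightarrow> ('a \<Rightarrow> real) \<Rightarrow> (nat \<Rightarrow> 'a \<Rightarrow> real) \<Rightarrow> nat \<Rightarrow> bool" where
  "partially_faithful M Y X p \<longleftrightarrow>
    (\<forall>j\<in>{1..p}. (\<exists>S. S \<subseteq> {1..p} - {j} \<and> pcor M Y (X j) X S = 0)
        \<longrightarrow> pcor M Y (X j) X ({1..p} - {j}) = 0)"

text \<open>Population PC-simple algorithm: pc_A M Y X p m is A^[m] for m \<ge> 1
  (index 0 is an unused dummy).\<close>

fun pc_A :: "'a measure \<Rightarrow> ('a \<Rightarrow> real) \<Rightarrow> (nat \<Rightarrow> 'a \<Rightarrow> real) \<Rightarrow> nat \<Rightarrow> nat \<Rightarrow> nat set" where
  "pc_A M Y X p 0 = {1..p}"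
| "pc_A M Y X p (Suc 0) = {j\<in>{1..p}. corr M Y (X j) \<noteq> 0}"
| "pc_A M Y X p (Suc (Suc m)) =
     {j \<in> pc_A M Y X p (Suc m). \<forall>S. S \<subseteq> pc_A M Y X p (Suc m) - {j} \<and> card S = Suc m
        \<longrightarrow> pcor M Y (X j) X S \<noteq> 0}"

definition m_reach :: "'a measure \<Rightarrow> ('a \<Rightarrow> real) \<Rightarrow> (nat \<Rightarrow> 'a \<Rightarrow> real) \<Rightarrow> nat \<Rightarrow> nat" where
  "m_reach M Y X p = (LEAST m. 1 \<le> m \<and> card (pc_A M Y X p m) \<le> m)"

end

theory Submission
  imports Defs
begin

text \<open>In the linear model, conditioning on any \<open>S \<supseteq> A\<close> leaves \<open>\<epsilon>\<close> (plus a constant) as the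
  residual of \<open>Y\<close>; it is uncorrelated with every covariate, so \<open>\<rho>(Y, X\<^sub>j | X\<^sub>S) = 0\<close>.
  For \<open>j \<in> A\<close>, the residual of \<open>Y\<close> given all other covariates is \<open>\<beta>\<^sub>j r + \<epsilon>\<close>, where \<open>r\<close> is
  the residual of \<open>X\<^sub>j\<close>; by positive definiteness \<open>r\<close> has positive variance, so this partial
  correlation is nonzero, and partial faithfulness makes every \<open>\<rho>(Y, X\<^sub>j | X\<^sub>S)\<close> nonzero.
  Hence no active variable is ever removed, while at step \<open>|A| + 1\<close> every inactive survivor is
  removed by conditioning on \<open>A\<close> itself. So the algorithm stops at some \<open>m \<le> |A| + 1\<close> with
  \<open>A \<subseteq> A^[m]\<close> and \<open>|A^[m]| \<le> m\<close>, which forces \<open>A^[m] = A\<close>.\<close>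

section \<open>Square-integrable functions\<close>

definition square_integrable :: "'a measure \<Rightarrow> ('a \<Rightarrow> real) \<Rightarrow> bool" where
  "square_integrable M f \<longleftrightarrow> f \<in> borel_measurable M \<and> integrable M (\<lambda>x. (f x)\<^sup>2)"

abbreviation affine_resid ::
    "('a \<Rightarrow> real) \<Rightarrow> (nat \<Rightarrow> 'a \<Rightarrow> real) \<Rightarrow> nat set \<Rightarrow> real \<Rightarrow> (nat \<Rightarrow> real) \<Rightarrow> 'a \<Rightarrow> real" where
  "affine_resid Z W S a b \<equiv> \<lambda>x. Z x - a - (\<Sum>k\<in>S. b k * W k x)"

definition orthogonal_to_span :: "'a measure \<Rightarrow> ('a \<Rightarrow> real) \<Rightarrow> (nat \<Rightarrow> 'a \<Rightarrow> real) \<Rightarrow> nat set \<Rightarrow> bool" where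
  "orthogonal_to_span M r W S \<longleftrightarrow> (\<integral>x. r x \<partial>M) = 0 \<and> (\<forall>i\<in>S. (\<integral>x. r x * W i x \<partial>M) = 0)"

lemma integrable_mult_square_integrable:
  assumes "square_integrable M f" "square_integrable M g"
  shows "integrable M (\<lambda>x. f x * g x)"
proof (rule Bochner_Integration.integrable_bound)
  show "integrable M (\<lambda>x. (f x)\<^sup>2 + (g x)\<^sup>2)"
    using assms by (simp add: square_integrable_def)
  show "(\<lambda>x. f x * g x) \<in> borel_measurable M"
    using assms by (simp add: square_integrable_def borel_measurable_times)
  have "\<bar>f x * g x\<bar> \<le> (f x)\<^sup>2 + (g x)\<^sup>2" for x
  proof -
    have "2 * (\<bar>f x\<bar> * \<bar>g x\<bar>) \<le> (f x)\<^sup>2 + (g x)\<^sup>2"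
      using sum_squares_bound[of "\<bar>f x\<bar>" "\<bar>g x\<bar>"] by (simp add: mult.assoc)
    moreover have "0 \<le> \<bar>f x\<bar> * \<bar>g x\<bar>"
      by simp
    ultimately show ?thesis
      unfolding abs_mult by linarith
  qed
  then show "AE x in M. norm (f x * g x) \<le> norm ((f x)\<^sup>2 + (g x)\<^sup>2)"
    by simp
qed

lemma square_integrable_add:
  assumes "square_integrable M f" "square_integrable M g"
  shows "square_integrable M (\<lambda>x. f x + g x)"
proof -
  have "(\<lambda>x. (f x + g x)\<^sup>2) = (\<lambda>x. (f x)\<^sup>2 + 2 * (f x * g x) + (g x)\<^sup>2)"
    by (simp add: power2_sum algebra_simps)
  then show ?thesis
    using assms integrable_mult_square_integrable[OF assms]
    by (simp add: square_integrable_def borel_measurable_add)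
qed

lemma square_integrable_cmult:
  assumes "square_integrable M f"
  shows "square_integrable M (\<lambda>x. c * f x)"
  using assms by (simp add: square_integrable_def power_mult_distrib borel_measurable_times)

lemma square_integrable_diff:
  assumes "square_integrable M f" "square_integrable M g"
  shows "square_integrable M (\<lambda>x. f x - g x)"
  using square_integrable_add[OF assms(1) square_integrable_cmult[OF assms(2), of "-1"]] by simp

lemma square_integrable_sum:
  assumes "\<And>k. k \<in> S \<Longrightarrow> square_integrable M (f k)"
  shows "square_integrable M (\<lambda>x. \<Sum>k\<in>S. f k x)"
proof -
  have "square_integrable M (\<lambda>x. 0)"
    by (simp add: square_integrable_def)
  with assms show ?thesis
    by (induction S rule: infinite_finite_induct) (auto intro: square_integrable_add)
qed

context finite_measure
begin

lemma square_integrable_integrable: "square_integrable M f \<Longrightarrow> integrable M f"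
  by (auto simp: square_integrable_def intro: square_integrable_imp_integrable)

lemma square_integrable_const: "square_integrable M (\<lambda>x. c)"
  by (simp add: square_integrable_def)

lemma square_integrable_affine:
  assumes "\<And>k. k \<in> S \<Longrightarrow> square_integrable M (W k)"
  shows "square_integrable M (\<lambda>x. a + (\<Sum>k\<in>S. b k * W k x))"
  by (intro square_integrable_add square_integrable_sum square_integrable_cmult
      square_integrable_const assms)

lemma square_integrable_affine_resid:
  assumes "square_integrable M Z" "\<And>k. k \<in> S \<Longrightarrow> square_integrable M (W k)"
  shows "square_integrable M (affine_resid Z W S a b)"
  by (intro square_integrable_diff square_integrable_sum square_integrable_cmult
      square_integrable_const assms)

end

section \<open>Orthogonal residuals and partial correlations\<close>

lemma lin_resid_minimizer:
  assumes "\<forall>a' b'. (\<integral>x. (affine_resid Z W S a0 b0 x)\<^sup>2 \<partial>M) \<le> (\<integral>x. (affine_resid Z W S a' b' x)\<^sup>2 \<partial>M)"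
  obtains a b where "lin_resid M Z W S = affine_resid Z W S a b"
    and "\<forall>a' b'. (\<integral>x. (affine_resid Z W S a b x)\<^sup>2 \<partial>M) \<le> (\<integral>x. (affine_resid Z W S a' b' x)\<^sup>2 \<partial>M)"
proof -
  define P where "P = (\<lambda>(a, b). \<forall>a' b'.
    (\<integral>x. (affine_resid Z W S a b x)\<^sup>2 \<partial>M) \<le> (\<integral>x. (affine_resid Z W S a' b' x)\<^sup>2 \<partial>M))"
  have "P (a0, b0)"
    using assms by (simp add: P_def)
  then have "P (Eps P)"
    by (rule someI)
  moreover have "lin_resid M Z W S = affine_resid Z W S (fst (Eps P)) (snd (Eps P))"
    unfolding lin_resid_def Let_def P_def by simp
  ultimately show ?thesis
    using that by (cases "Eps P") (simp add: P_def)
qed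

lemma covar_cong_AE:
  assumes "f \<in> borel_measurable M" "f' \<in> borel_measurable M"
    "g \<in> borel_measurable M" "g' \<in> borel_measurable M"
    "AE x in M. f x = f' x" "AE x in M. g x = g' x"
  shows "covar M f g = covar M f' g'"
proof -
  have "(\<integral>x. f x \<partial>M) = (\<integral>x. f' x \<partial>M)" "(\<integral>x. g x \<partial>M) = (\<integral>x. g' x \<partial>M)"
    using assms by (auto intro: integral_cong_AE)
  then show ?thesis
    unfolding covar_def using assms by (auto intro: integral_cong_AE)
qed

lemma corr_cong_AE:
  assumes "f \<in> borel_measurable M" "f' \<in> borel_measurable M"
    "g \<in> borel_measurable M" "g' \<in> borel_measurable M"
    "AE x in M. f x = f' x" "AE x in M. g x = g' x"
  shows "corr M f g = corr M f' g'"
  unfolding corr_def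
  using covar_cong_AE[OF assms] covar_cong_AE[OF assms(1,2,1,2,5,5)]
    covar_cong_AE[OF assms(3,4,3,4,6,6)]
  by simp

lemma covar_eq_integral_mult:
  assumes "(\<integral>x. U x \<partial>M) = 0" "(\<integral>x. V x \<partial>M) = 0"
  shows "covar M U V = (\<integral>x. U x * V x \<partial>M)"
  using assms by (simp add: covar_def)

context prob_space
begin

lemma integral_mult_affine:
  assumes "finite S" "square_integrable M U" "\<And>k. k \<in> S \<Longrightarrow> square_integrable M (W k)"
  shows "(\<integral>x. U x * (c + (\<Sum>k\<in>S. e k * W k x)) \<partial>M)
     = c * (\<integral>x. U x \<partial>M) + (\<Sum>k\<in>S. e k * (\<integral>x. U x * W k x \<partial>M))"
proof -
  have "(\<lambda>x. U x * (c + (\<Sum>k\<in>S. e k * W k x)))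
      = (\<lambda>x. c * U x + (\<Sum>k\<in>S. e k * (U x * W k x)))"
    by (simp add: algebra_simps sum_distrib_left)
  moreover have "integrable M (\<lambda>x. c * U x)"
    using square_integrable_integrable[OF assms(2)] by simp
  moreover have "integrable M (\<lambda>x. e k * (U x * W k x))" if "k \<in> S" for k
    using integrable_mult_square_integrable[OF assms(2) assms(3)[OF that]] by simp
  ultimately show ?thesis
    by (simp add: integral_sum)
qed

lemma integral_mult_affine_resid:
  assumes "finite S" "square_integrable M U" "square_integrable M Z"
    "\<And>k. k \<in> S \<Longrightarrow> square_integrable M (W k)"
  shows "(\<integral>x. U x * affine_resid Z W S a b x \<partial>M)
     = (\<integral>x. U x * Z x \<partial>M) - a * (\<integral>x. U x \<partial>M) - (\<Sum>k\<in>S. b k * (\<integral>x. U x * W k x \<partial>M))"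
proof -
  have "(\<lambda>x. U x * affine_resid Z W S a b x)
      = (\<lambda>x. U x * Z x - U x * (a + (\<Sum>k\<in>S. b k * W k x)))"
    by (simp add: algebra_simps)
  moreover have "integrable M (\<lambda>x. U x * Z x)"
    using integrable_mult_square_integrable[OF assms(2,3)] .
  moreover have "integrable M (\<lambda>x. U x * (a + (\<Sum>k\<in>S. b k * W k x)))"
    using integrable_mult_square_integrable[OF assms(2) square_integrable_affine[OF assms(4)]] .
  ultimately show ?thesis
    using integral_mult_affine[OF assms(1,2,4), where c=a and e=b] by (simp add: sum_negf)
qed

lemma orthogonal_integral_mult_affine:
  assumes "finite S" "square_integrable M r" "\<And>k. k \<in> S \<Longrightarrow> square_integrable M (W k)"
    "orthogonal_to_span M r W S"
  shows "(\<integral>x. r x * (c + (\<Sum>k\<in>S. e k * W k x)) \<partial>M) = 0"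
  using integral_mult_affine[OF assms(1-3)] assms(4) by (simp add: orthogonal_to_span_def)

lemma integral_mult_eq_0_if_integral_square_eq_0:
  assumes "square_integrable M r" "square_integrable M u" "(\<integral>x. (u x)\<^sup>2 \<partial>M) = 0"
  shows "(\<integral>x. r x * u x \<partial>M) = 0"
proof -
  have "AE x in M. (u x)\<^sup>2 = 0"
    using assms integral_nonneg_eq_0_iff_AE[of M "\<lambda>x. (u x)\<^sup>2"]
    by (simp add: square_integrable_def)
  then have "AE x in M. r x * u x = 0"
    by auto
  then show ?thesis
    by (simp add: integral_eq_zero_AE)
qed

lemma orthogonal_to_span_lincomb:
  assumes r: "square_integrable M r" and e: "square_integrable M e"
    and W: "\<And>i. i \<in> S \<Longrightarrow> square_integrable M (W i)"
    and "orthogonal_to_span M r W S" "orthogonal_to_span M e W S"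
  shows "orthogonal_to_span M (\<lambda>x. c * r x + e x) W S"
proof -
  have "(\<integral>x. (c * r x + e x) * W i x \<partial>M) = c * (\<integral>x. r x * W i x \<partial>M) + (\<integral>x. e x * W i x \<partial>M)"
    if "i \<in> S" for i
    using integrable_mult_square_integrable[OF r W[OF that]]
      integrable_mult_square_integrable[OF e W[OF that]]
    by (simp add: distrib_right mult.assoc)
  then show ?thesis
    using assms square_integrable_integrable[OF r] square_integrable_integrable[OF e]
    by (simp add: orthogonal_to_span_def)
qed

text \<open>One Gram--Schmidt step: \<open>u\<close> is the part of \<open>W k\<close> orthogonal to the span over \<open>S\<close>,
  and subtracting from \<open>r\<close> its projection onto \<open>u\<close> extends the orthogonality to \<open>W k\<close>.\<close>

lemma orthogonal_to_span_insert:
  assumes S: "finite S" and W: "\<And>i. i \<in> S \<Longrightarrow> square_integrable M (W i)"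
    and r: "square_integrable M r" and u: "square_integrable M u"
    and r_orth: "orthogonal_to_span M r W S" and u_orth: "orthogonal_to_span M u W S"
    and Wk: "\<And>x. W k x = u x + (a + (\<Sum>i\<in>S. b i * W i x))"
  defines "c \<equiv> (\<integral>x. r x * u x \<partial>M) / (\<integral>x. (u x)\<^sup>2 \<partial>M)"
  shows "orthogonal_to_span M (\<lambda>x. r x - c * u x) W (insert k S)"
proof -
  define r' where "r' = (\<lambda>x. r x - c * u x)"
  have r': "square_integrable M r'"
    unfolding r'_def by (intro square_integrable_diff square_integrable_cmult r u)
  have int: "integrable M (\<lambda>x. v x * w x)"
    if "square_integrable M v" "square_integrable M w" for v w
    using integrable_mult_square_integrable[OF that] .
  have "r' = (\<lambda>x. (- c) * u x + r x)"
    by (simp add: r'_def fun_eq_iff)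
  then have r'_orth: "orthogonal_to_span M r' W S"
    using orthogonal_to_span_lincomb[OF u r W u_orth r_orth, of "- c"] by (simp only:)
  have "(\<lambda>x. r' x * W k x) = (\<lambda>x. r' x * u x + r' x * (a + (\<Sum>i\<in>S. b i * W i x)))"
    by (simp add: Wk distrib_left)
  then have "(\<integral>x. r' x * W k x \<partial>M) = (\<integral>x. r' x * u x \<partial>M)"
    using int[OF r' u] int[OF r' square_integrable_affine[OF W, where a=a and b=b]]
      orthogonal_integral_mult_affine[OF S r' W r'_orth, where c=a and e=b]
    by simp
  also have "\<dots> = (\<integral>x. r x * u x \<partial>M) - c * (\<integral>x. (u x)\<^sup>2 \<partial>M)"
    unfolding r'_def left_diff_distrib mult.assoc power2_eq_square
    using int[OF r u] int[OF u u] by simp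
  also have "\<dots> = 0"
    using integral_mult_eq_0_if_integral_square_eq_0[OF r u]
    by (cases "(\<integral>x. (u x)\<^sup>2 \<partial>M) = 0") (simp_all add: c_def)
  finally show ?thesis
    using r'_orth by (simp add: orthogonal_to_span_def r'_def)
qed

lemma orthogonal_affine_resid_exists:
  assumes "finite S" "square_integrable M Z" "\<And>k. k \<in> S \<Longrightarrow> square_integrable M (W k)"
  shows "\<exists>a b. orthogonal_to_span M (affine_resid Z W S a b) W S"
  using assms
proof (induction S arbitrary: Z rule: finite_induct)
  case empty
  then show ?case
    by (intro exI[of _ "\<integral>x. Z x \<partial>M"])
       (simp add: orthogonal_to_span_def prob_space square_integrable_integrable)
next
  case (insert k S)
  have W: "\<And>i. i \<in> S \<Longrightarrow> square_integrable M (W i)" and Wk: "square_integrable M (W k)"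
    using insert.prems by auto
  obtain a1 b1 where o1: "orthogonal_to_span M (affine_resid Z W S a1 b1) W S"
    using insert.IH[OF insert.prems(1) W] by blast
  obtain a2 b2 where o2: "orthogonal_to_span M (affine_resid (W k) W S a2 b2) W S"
    using insert.IH[OF Wk W] by blast
  define c where "c = (\<integral>x. affine_resid Z W S a1 b1 x * affine_resid (W k) W S a2 b2 x \<partial>M)
                    / (\<integral>x. (affine_resid (W k) W S a2 b2 x)\<^sup>2 \<partial>M)"
  have "orthogonal_to_span M
      (\<lambda>x. affine_resid Z W S a1 b1 x - c * affine_resid (W k) W S a2 b2 x) W (insert k S)"
    unfolding c_def
    by (rule orthogonal_to_span_insert[OF insert.hyps(1) W _ _ o1 o2, where a=a2 and b=b2])
       (auto intro: square_integrable_affine_resid W Wk insert.prems(1))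
  moreover have "(\<lambda>x. affine_resid Z W S a1 b1 x - c * affine_resid (W k) W S a2 b2 x)
      = affine_resid Z W (insert k S) (a1 - c * a2) (\<lambda>i. if i = k then c else b1 i - c * b2 i)"
  proof
    fix x
    have "(\<Sum>i\<in>S. (if i = k then c else b1 i - c * b2 i) * W i x)
        = (\<Sum>i\<in>S. (b1 i - c * b2 i) * W i x)"
      using insert.hyps(2) by (intro sum.cong) auto
    also have "\<dots> = (\<Sum>i\<in>S. b1 i * W i x) - c * (\<Sum>i\<in>S. b2 i * W i x)"
      by (simp add: left_diff_distrib sum_subtractf sum_distrib_left mult.assoc)
    finally show "affine_resid Z W S a1 b1 x - c * affine_resid (W k) W S a2 b2 x
        = affine_resid Z W (insert k S) (a1 - c * a2) (\<lambda>i. if i = k then c else b1 i - c * b2 i) x"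
      using insert.hyps by (simp add: algebra_simps)
  qed
  ultimately show ?case
    by metis
qed

lemma integral_square_affine_resid:
  assumes S: "finite S" and Z: "square_integrable M Z"
    and W: "\<And>k. k \<in> S \<Longrightarrow> square_integrable M (W k)"
    and orth: "orthogonal_to_span M (affine_resid Z W S a0 b0) W S"
  shows "(\<integral>x. (affine_resid Z W S a b x)\<^sup>2 \<partial>M)
    = (\<integral>x. (affine_resid Z W S a0 b0 x)\<^sup>2 \<partial>M)
      + (\<integral>x. ((a0 - a) + (\<Sum>k\<in>S. (b0 k - b k) * W k x))\<^sup>2 \<partial>M)"
proof -
  let ?r = "affine_resid Z W S a0 b0"
  let ?d = "\<lambda>x. (a0 - a) + (\<Sum>k\<in>S. (b0 k - b k) * W k x)"
  have r: "square_integrable M ?r"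
    by (rule square_integrable_affine_resid[OF Z W])
  have d: "square_integrable M ?d"
    by (rule square_integrable_affine[OF W])
  have "(\<lambda>x. (affine_resid Z W S a b x)\<^sup>2) = (\<lambda>x. (?r x)\<^sup>2 + (?d x)\<^sup>2 + 2 * (?r x * ?d x))"
  proof
    fix x
    have "affine_resid Z W S a b x = ?r x + ?d x"
      by (simp add: algebra_simps sum_subtractf)
    then show "(affine_resid Z W S a b x)\<^sup>2 = (?r x)\<^sup>2 + (?d x)\<^sup>2 + 2 * (?r x * ?d x)"
      using power2_sum[of "?r x" "?d x"] by (simp only: mult.assoc)
  qed
  moreover have "(\<integral>x. ?r x * ?d x \<partial>M) = 0"
    by (rule orthogonal_integral_mult_affine[OF S r W orth])
  ultimately show ?thesis
    using r d integrable_mult_square_integrable[OF r d] by (simp add: square_integrable_def)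
qed

text \<open>\<open>lin_resid\<close> is defined as an arbitrary least-squares residual, but by Pythagoras every
  least-squares residual agrees almost everywhere with the residual satisfying the normal
  equations.\<close>

lemma lin_resid_AE_eq:
  assumes S: "finite S" and Z: "square_integrable M Z"
    and W: "\<And>k. k \<in> S \<Longrightarrow> square_integrable M (W k)"
    and orth: "orthogonal_to_span M (affine_resid Z W S a0 b0) W S"
  shows "AE x in M. lin_resid M Z W S x = affine_resid Z W S a0 b0 x"
proof -
  let ?d = "\<lambda>a b x. (a0 - a) + (\<Sum>k\<in>S. (b0 k - b k) * W k x)"
  note pythagoras = integral_square_affine_resid[OF S Z W orth]
  have d_nonneg: "0 \<le> (\<integral>x. (?d a b x)\<^sup>2 \<partial>M)" for a b
    by (simp add: integral_nonneg_AE)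
  have "\<forall>a' b'. (\<integral>x. (affine_resid Z W S a0 b0 x)\<^sup>2 \<partial>M) \<le> (\<integral>x. (affine_resid Z W S a' b' x)\<^sup>2 \<partial>M)"
  proof (intro allI)
    fix a' b'
    show "(\<integral>x. (affine_resid Z W S a0 b0 x)\<^sup>2 \<partial>M) \<le> (\<integral>x. (affine_resid Z W S a' b' x)\<^sup>2 \<partial>M)"
      using pythagoras[of a' b'] d_nonneg[of a' b'] by linarith
  qed
  then obtain a b where lr: "lin_resid M Z W S = affine_resid Z W S a b"
    and min: "\<forall>a' b'. (\<integral>x. (affine_resid Z W S a b x)\<^sup>2 \<partial>M) \<le> (\<integral>x. (affine_resid Z W S a' b' x)\<^sup>2 \<partial>M)"
    by (rule lin_resid_minimizer)
  have "(\<integral>x. (affine_resid Z W S a b x)\<^sup>2 \<partial>M) \<le> (\<integral>x. (affine_resid Z W S a0 b0 x)\<^sup>2 \<partial>M)"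
    using min by blast
  then have "(\<integral>x. (?d a b x)\<^sup>2 \<partial>M) = 0"
    using pythagoras[of a b] d_nonneg[of a b] by linarith
  then have "AE x in M. (?d a b x)\<^sup>2 = 0"
    using square_integrable_affine[OF W, where a="a0 - a" and b="\<lambda>k. b0 k - b k"]
    by (simp add: square_integrable_def integral_nonneg_eq_0_iff_AE)
  then show ?thesis
  proof (rule eventually_mono)
    fix x
    assume "(?d a b x)\<^sup>2 = 0"
    moreover have "?d a b x = (a0 - a) + (\<Sum>k\<in>S. b0 k * W k x) - (\<Sum>k\<in>S. b k * W k x)"
      by (simp add: left_diff_distrib sum_subtractf)
    ultimately show "lin_resid M Z W S x = affine_resid Z W S a0 b0 x"
      unfolding lr by simp
  qed
qed

lemma pcor_eq_corr_orthogonal_resids: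
  assumes S: "finite S" and W: "\<And>k. k \<in> S \<Longrightarrow> square_integrable M (W k)"
    and Z1: "square_integrable M Z1" and Z2: "square_integrable M Z2"
    and orth1: "orthogonal_to_span M (affine_resid Z1 W S a1 b1) W S"
    and orth2: "orthogonal_to_span M (affine_resid Z2 W S a2 b2) W S"
  shows "pcor M Z1 Z2 W S = corr M (affine_resid Z1 W S a1 b1) (affine_resid Z2 W S a2 b2)"
proof -
  have "lin_resid M Z W S \<in> borel_measurable M" if "square_integrable M Z" for Z
    unfolding lin_resid_def Let_def
    using square_integrable_affine_resid[OF that W] by (simp add: square_integrable_def)
  moreover have "affine_resid Z W S a b \<in> borel_measurable M" if "square_integrable M Z" for Z a b
    using square_integrable_affine_resid[OF that W] by (simp add: square_integrable_def)
  ultimately show ?thesis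
    unfolding pcor_def using Z1 Z2
    by (intro corr_cong_AE lin_resid_AE_eq[OF S _ W] orth1 orth2)
qed

lemma pcor_empty_eq_corr:
  assumes "square_integrable M Z1" "square_integrable M Z2"
  shows "pcor M Z1 Z2 W {} = corr M Z1 Z2"
proof -
  have orth: "orthogonal_to_span M (affine_resid Z W {} (\<integral>x. Z x \<partial>M) b) W {}"
    if "square_integrable M Z" for Z b
    using square_integrable_integrable[OF that] by (simp add: orthogonal_to_span_def prob_space)
  have "pcor M Z1 Z2 W {} = corr M (affine_resid Z1 W {} (\<integral>x. Z1 x \<partial>M) (\<lambda>_. 0))
      (affine_resid Z2 W {} (\<integral>x. Z2 x \<partial>M) (\<lambda>_. 0))"
    using assms by (intro pcor_eq_corr_orthogonal_resids orth) auto
  also have "\<dots> = corr M Z1 Z2"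
    using square_integrable_integrable[OF assms(1)] square_integrable_integrable[OF assms(2)]
    by (simp add: corr_def covar_def prob_space)
  finally show ?thesis .
qed

lemma corr_scaled_add_uncorrelated_neq_0:
  assumes r: "square_integrable M r" and e: "square_integrable M e"
    and r_mean: "(\<integral>x. r x \<partial>M) = 0" and e_mean: "(\<integral>x. e x \<partial>M) = 0"
    and uncorr: "(\<integral>x. e x * r x \<partial>M) = 0"
    and r_var: "(\<integral>x. (r x)\<^sup>2 \<partial>M) > 0" and "c \<noteq> 0"
  shows "corr M (\<lambda>x. c * r x + e x) r \<noteq> 0"
proof -
  define v where "v = (\<integral>x. (r x)\<^sup>2 \<partial>M)"
  have int: "integrable M (\<lambda>x. r x * r x)" "integrable M (\<lambda>x. e x * r x)"
    "integrable M (\<lambda>x. e x * e x)"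
    using integrable_mult_square_integrable r e by auto
  have mean: "(\<integral>x. c * r x + e x \<partial>M) = 0"
    using r e r_mean e_mean by (simp add: square_integrable_integrable)
  have "covar M (\<lambda>x. c * r x + e x) r = (\<integral>x. c * (r x * r x) + e x * r x \<partial>M)"
    using covar_eq_integral_mult[OF mean r_mean] by (simp add: algebra_simps)
  also have "\<dots> = c * v"
    using int uncorr by (simp add: v_def power2_eq_square)
  finally have cov: "covar M (\<lambda>x. c * r x + e x) r = c * v" .
  have "covar M (\<lambda>x. c * r x + e x) (\<lambda>x. c * r x + e x)
      = (\<integral>x. c\<^sup>2 * (r x * r x) + 2 * c * (e x * r x) + e x * e x \<partial>M)"
    using covar_eq_integral_mult[OF mean mean] by (simp add: algebra_simps power2_eq_square)
  also have "\<dots> = c\<^sup>2 * v + (\<integral>x. e x * e x \<partial>M)"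
    using int uncorr by (simp add: v_def power2_eq_square)
  also have "\<dots> > 0"
    using r_var \<open>c \<noteq> 0\<close> by (simp add: v_def integral_nonneg_AE add_pos_nonneg)
  finally have var: "covar M (\<lambda>x. c * r x + e x) (\<lambda>x. c * r x + e x) > 0" .
  have "covar M r r = v"
    using covar_eq_integral_mult[OF r_mean r_mean] by (simp add: v_def power2_eq_square)
  then show ?thesis
    unfolding corr_def cov using var r_var \<open>c \<noteq> 0\<close> by (simp add: v_def)
qed

lemma integral_square_centered_sum:
  assumes "finite I" "\<And>k. k \<in> I \<Longrightarrow> square_integrable M (W k)"
  shows "(\<integral>x. (\<Sum>k\<in>I. c k * (W k x - (\<integral>y. W k y \<partial>M)))\<^sup>2 \<partial>M)
    = (\<Sum>i\<in>I. \<Sum>k\<in>I. c i * c k * covar M (W i) (W k))"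
proof -
  define V where "V = (\<lambda>k x. W k x - (\<integral>y. W k y \<partial>M))"
  have int: "integrable M (\<lambda>x. c i * c k * (V i x * V k x))" if "i \<in> I" "k \<in> I" for i k
    unfolding V_def using assms(2)[OF that(1)] assms(2)[OF that(2)]
    by (intro integrable_mult_right integrable_mult_square_integrable square_integrable_diff
        square_integrable_const)
  have "(\<lambda>x. (\<Sum>k\<in>I. c k * V k x)\<^sup>2) = (\<lambda>x. \<Sum>i\<in>I. \<Sum>k\<in>I. c i * c k * (V i x * V k x))"
    by (simp add: power2_eq_square sum_product algebra_simps)
  then have "(\<integral>x. (\<Sum>k\<in>I. c k * V k x)\<^sup>2 \<partial>M)
      = (\<Sum>i\<in>I. \<Sum>k\<in>I. c i * c k * (\<integral>x. V i x * V k x \<partial>M))"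
    using int by (simp add: Bochner_Integration.integral_sum integrable_sum)
  then show ?thesis
    by (simp add: V_def covar_def)
qed

end

section \<open>The population PC-simple algorithm\<close>

lemma pc_A_Suc_subset: "pc_A M Y X p (Suc m) \<subseteq> {1..p}"
  by (induction m) auto

locale pc_active_set =
  fixes M :: "'a measure" and Y :: "'a \<Rightarrow> real" and X :: "nat \<Rightarrow> 'a \<Rightarrow> real"
    and p :: nat and A :: "nat set"
  assumes active_subset: "A \<subseteq> {1..p}"
    and faithful: "partially_faithful M Y X p"
    and corr_eq_pcor_empty: "\<And>j. j \<in> {1..p} \<Longrightarrow> corr M Y (X j) = pcor M Y (X j) X {}"
    and pcor_inactive: "\<And>j. j \<in> {1..p} - A \<Longrightarrow> pcor M Y (X j) X A = 0"
    and pcor_active: "\<And>j. j \<in> A \<Longrightarrow> pcor M Y (X j) X ({1..p} - {j}) \<noteq> 0"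
begin

lemma pcor_active_neq_0:
  assumes "j \<in> A" "S \<subseteq> {1..p} - {j}"
  shows "pcor M Y (X j) X S \<noteq> 0"
  using faithful pcor_active[OF assms(1)] assms active_subset
  unfolding partially_faithful_def by blast

lemma active_subset_pc_A: "A \<subseteq> pc_A M Y X p (Suc m)"
proof (induction m)
  case 0
  show ?case
  proof
    fix j
    assume j: "j \<in> A"
    then have "corr M Y (X j) \<noteq> 0"
      using active_subset corr_eq_pcor_empty pcor_active_neq_0[OF j, of "{}"] by auto
    then show "j \<in> pc_A M Y X p (Suc 0)"
      using j active_subset by auto
  qed
next
  case (Suc m)
  show ?case
  proof
    fix j
    assume j: "j \<in> A"
    have "pcor M Y (X j) X S \<noteq> 0" if "S \<subseteq> pc_A M Y X p (Suc m) - {j}" for S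
      using pcor_active_neq_0[OF j] that pc_A_Suc_subset[of M Y X p m] by blast
    moreover have "j \<in> pc_A M Y X p (Suc m)"
      using Suc.IH j by blast
    ultimately show "j \<in> pc_A M Y X p (Suc (Suc m))"
      by simp
  qed
qed

lemma pc_A_Suc_card: "pc_A M Y X p (Suc (card A)) = A"
proof (cases "card A")
  case 0
  then have A: "A = {}"
    using active_subset by (simp add: finite_subset)
  have "corr M Y (X j) = 0" if "j \<in> {1..p}" for j
    using that corr_eq_pcor_empty pcor_inactive unfolding A by simp
  then show ?thesis
    unfolding 0 A by auto
next
  case (Suc n)
  have "j \<in> A" if j: "j \<in> pc_A M Y X p (Suc (Suc n))" for j
  proof (rule ccontr)
    assume "j \<notin> A"
    then have "pcor M Y (X j) X A = 0"
      using j pc_A_Suc_subset[of M Y X p "Suc n"] pcor_inactive by blast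
    moreover have "A \<subseteq> pc_A M Y X p (Suc n) - {j}"
      using active_subset_pc_A \<open>j \<notin> A\<close> by blast
    ultimately show False
      using j Suc by simp
  qed
  then show ?thesis
    unfolding Suc using active_subset_pc_A[of "Suc n"] by blast
qed

lemma pc_A_m_reach: "pc_A M Y X p (m_reach M Y X p) = A"
proof -
  let ?stop = "\<lambda>m. 1 \<le> m \<and> card (pc_A M Y X p m) \<le> m"
  define m where "m = m_reach M Y X p"
  have stop_card: "?stop (Suc (card A))"
    using pc_A_Suc_card by simp
  have stop: "?stop m"
    unfolding m_def m_reach_def by (rule LeastI[of ?stop, OF stop_card])
  have "m \<le> Suc (card A)"
    unfolding m_def m_reach_def by (rule Least_le[of ?stop, OF stop_card])
  then consider "m = Suc (card A)" | "m \<le> card A"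
    by linarith
  then have "pc_A M Y X p m = A"
  proof cases
    case 1
    then show ?thesis
      using pc_A_Suc_card by simp
  next
    case 2
    from stop obtain k where k: "m = Suc k"
      using not0_implies_Suc by force
    have fin: "finite (pc_A M Y X p m)"
      unfolding k using finite_subset[OF pc_A_Suc_subset[of M Y X p k]] by simp
    have sub: "A \<subseteq> pc_A M Y X p m"
      unfolding k by (rule active_subset_pc_A)
    have "card (pc_A M Y X p m) \<le> card A"
      using stop 2 by linarith
    then show ?thesis
      using card_seteq[OF fin sub] by simp
  qed
  then show ?thesis
    by (simp add: m_def)
qed

end

section \<open>The linear model\<close>

locale linear_model = prob_space M for M :: "'a measure" +
  fixes X :: "nat \<Rightarrow> 'a \<Rightarrow> real" and eps Y :: "'a \<Rightarrow> real"
    and p :: nat and \<delta> :: real and \<beta> :: "nat \<Rightarrow> real"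
  assumes X_meas: "\<And>j. j \<in> {1..p} \<Longrightarrow> X j \<in> borel_measurable M"
    and X_sq: "\<And>j. j \<in> {1..p} \<Longrightarrow> integrable M (\<lambda>\<omega>. (X j \<omega>)\<^sup>2)"
    and pos_def: "\<And>c :: nat \<Rightarrow> real. (\<exists>j\<in>{1..p}. c j \<noteq> 0) \<Longrightarrow>
        (\<Sum>j\<in>{1..p}. \<Sum>k\<in>{1..p}. c j * c k * covar M (X j) (X k)) > 0"
    and eps_meas: "eps \<in> borel_measurable M"
    and eps_sq: "integrable M (\<lambda>\<omega>. (eps \<omega>)\<^sup>2)"
    and eps_mean: "(\<integral>\<omega>. eps \<omega> \<partial>M) = 0"
    and uncorr: "\<And>j. j \<in> {1..p} \<Longrightarrow> covar M eps (X j) = 0"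
    and Y_def: "\<And>\<omega>. Y \<omega> = \<delta> + (\<Sum>j\<in>{1..p}. \<beta> j * X j \<omega>) + eps \<omega>"
begin

definition active :: "nat set" where
  "active = {j\<in>{1..p}. \<beta> j \<noteq> 0}"

lemma active_subset: "active \<subseteq> {1..p}"
  by (auto simp: active_def)

lemma square_integrable_X: "j \<in> {1..p} \<Longrightarrow> square_integrable M (X j)"
  using X_meas X_sq by (simp add: square_integrable_def)

lemma square_integrable_eps: "square_integrable M eps"
  using eps_meas eps_sq by (simp add: square_integrable_def)

lemma square_integrable_Y: "square_integrable M Y"
proof -
  have "Y = (\<lambda>\<omega>. \<delta> + (\<Sum>j\<in>{1..p}. \<beta> j * X j \<omega>) + eps \<omega>)"
    using Y_def by blast
  then show ?thesis
    by (simp only:) (intro square_integrable_add square_integrable_affine square_integrable_X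
        square_integrable_eps, simp)
qed

lemma integral_eps_mult_X: "j \<in> {1..p} \<Longrightarrow> (\<integral>x. eps x * X j x \<partial>M) = 0"
  using uncorr[of j] integrable_mult_square_integrable[OF square_integrable_eps square_integrable_X]
    square_integrable_integrable[OF square_integrable_eps]
  by (simp add: covar_def eps_mean algebra_simps)

lemma orthogonal_eps: "S \<subseteq> {1..p} \<Longrightarrow> orthogonal_to_span M eps X S"
  using integral_eps_mult_X eps_mean by (auto simp: orthogonal_to_span_def)

lemma integral_eps_mult_affine_resid:
  assumes "S \<subseteq> {1..p}" "j \<in> {1..p}"
  shows "(\<integral>x. eps x * affine_resid (X j) X S a b x \<partial>M) = 0"
proof -
  have S: "finite S" "\<And>k. k \<in> S \<Longrightarrow> square_integrable M (X k)"
    using assms(1) square_integrable_X finite_subset by auto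
  have "(\<Sum>k\<in>S. b k * (\<integral>x. eps x * X k x \<partial>M)) = 0"
    using assms(1) integral_eps_mult_X by (intro sum.neutral) auto
  then show ?thesis
    using integral_mult_affine_resid[where W=X, OF S(1) square_integrable_eps
        square_integrable_X[OF assms(2)] S(2)] integral_eps_mult_X[OF assms(2)] eps_mean
    by simp
qed

lemma pcor_inactive:
  assumes "active \<subseteq> S" "S \<subseteq> {1..p}" "j \<in> {1..p}"
  shows "pcor M Y (X j) X S = 0"
proof -
  have S: "finite S" "\<And>k. k \<in> S \<Longrightarrow> square_integrable M (X k)"
    using assms(2) square_integrable_X finite_subset by auto
  obtain a b where orth_X: "orthogonal_to_span M (affine_resid (X j) X S a b) X S"
    using orthogonal_affine_resid_exists[where W=X, OF S(1) square_integrable_X[OF assms(3)] S(2)] by blast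
  have "(\<Sum>k\<in>{1..p}. \<beta> k * X k x) = (\<Sum>k\<in>S. \<beta> k * X k x)" for x
    using assms(1,2) by (intro sum.mono_neutral_right) (auto simp: active_def)
  then have Y_resid: "affine_resid Y X S \<delta> \<beta> = eps"
    by (simp add: Y_def)
  have "pcor M Y (X j) X S = corr M eps (affine_resid (X j) X S a b)"
    using pcor_eq_corr_orthogonal_resids[where W=X, OF S square_integrable_Y square_integrable_X[OF assms(3)]
        _ orth_X, of \<delta> \<beta>] orthogonal_eps[OF assms(2)]
    unfolding Y_resid by simp
  also have "covar M eps (affine_resid (X j) X S a b) = 0"
    using covar_eq_integral_mult[OF eps_mean] orth_X integral_eps_mult_affine_resid[OF assms(2,3)]
    by (simp add: orthogonal_to_span_def)
  then have "corr M eps (affine_resid (X j) X S a b) = 0"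
    by (simp add: corr_def)
  finally show ?thesis .
qed

text \<open>The residual of \<open>X j\<close> on the other covariates is a nontrivial linear combination of the
  centred covariates (coefficient 1 at \<open>j\<close>), so its variance is a value of the positive
  definite covariance form.\<close>

lemma integral_square_affine_resid_pos:
  assumes j: "j \<in> {1..p}"
    and mean: "(\<integral>x. affine_resid (X j) X ({1..p} - {j}) a b x \<partial>M) = 0"
  shows "(\<integral>x. (affine_resid (X j) X ({1..p} - {j}) a b x)\<^sup>2 \<partial>M) > 0"
proof -
  define S where "S = {1..p} - {j}"
  have S: "finite S" "\<And>k. k \<in> S \<Longrightarrow> square_integrable M (X k)" and "j \<notin> S"
    and P: "{1..p} = insert j S"
    using j square_integrable_X by (auto simp: S_def)
  define \<mu> where "\<mu> = (\<lambda>k. \<integral>y. X k y \<partial>M)"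
  define c where "c = (\<lambda>k. if k = j then 1 else - b k)"
  have "(\<integral>x. 1 * affine_resid (X j) X S a b x \<partial>M)
      = (\<integral>x. 1 * X j x \<partial>M) - a * (\<integral>x. 1 \<partial>M) - (\<Sum>k\<in>S. b k * (\<integral>x. 1 * X k x \<partial>M))"
    by (rule integral_mult_affine_resid[where W=X, OF S(1) square_integrable_const
          square_integrable_X[OF j] S(2)])
  then have mean': "\<mu> j - a - (\<Sum>k\<in>S. b k * \<mu> k) = 0"
    using mean by (simp add: \<mu>_def S_def prob_space)
  have "affine_resid (X j) X S a b x = (\<Sum>k\<in>{1..p}. c k * (X k x - \<mu> k))" for x
  proof -
    have "(\<Sum>k\<in>{1..p}. c k * (X k x - \<mu> k)) = (X j x - \<mu> j) + (\<Sum>k\<in>S. - b k * (X k x - \<mu> k))"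
      unfolding P using S(1) \<open>j \<notin> S\<close> by (simp add: c_def) (intro sum.cong, auto)
    also have "\<dots> = X j x - \<mu> j + (\<Sum>k\<in>S. b k * \<mu> k) - (\<Sum>k\<in>S. b k * X k x)"
      by (simp add: algebra_simps sum_subtractf)
    finally show ?thesis
      using mean' by simp
  qed
  then have "(\<integral>x. (affine_resid (X j) X S a b x)\<^sup>2 \<partial>M)
      = (\<Sum>i\<in>{1..p}. \<Sum>k\<in>{1..p}. c i * c k * covar M (X i) (X k))"
    using integral_square_centered_sum[of "{1..p}" X c] square_integrable_X by (simp add: \<mu>_def)
  also have "\<dots> > 0"
    using j by (intro pos_def) (auto simp: c_def)
  finally show ?thesis
    by (simp add: S_def)
qed

lemma pcor_active:
  assumes "j \<in> active"
  shows "pcor M Y (X j) X ({1..p} - {j}) \<noteq> 0"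
proof -
  define S where "S = {1..p} - {j}"
  have j: "j \<in> {1..p}" and "\<beta> j \<noteq> 0"
    using assms by (auto simp: active_def)
  have S: "finite S" "\<And>k. k \<in> S \<Longrightarrow> square_integrable M (X k)" and "S \<subseteq> {1..p}"
    and P: "{1..p} = insert j S" and "j \<notin> S"
    using j square_integrable_X by (auto simp: S_def)
  obtain a b where orth_X: "orthogonal_to_span M (affine_resid (X j) X S a b) X S"
    using orthogonal_affine_resid_exists[where W=X, OF S(1) square_integrable_X[OF j] S(2)] by blast
  define r where "r = affine_resid (X j) X S a b"
  have r: "square_integrable M r"
    unfolding r_def by (intro square_integrable_affine_resid square_integrable_X j S(2))
  have "affine_resid Y X S (\<delta> + \<beta> j * a) (\<lambda>k. \<beta> k + \<beta> j * b k) x = \<beta> j * r x + eps x" for x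
  proof -
    have "(\<Sum>k\<in>S. (\<beta> k + \<beta> j * b k) * X k x) = (\<Sum>k\<in>S. \<beta> k * X k x) + \<beta> j * (\<Sum>k\<in>S. b k * X k x)"
      by (simp add: algebra_simps sum.distrib sum_distrib_left)
    moreover have "(\<Sum>k\<in>{1..p}. \<beta> k * X k x) = \<beta> j * X j x + (\<Sum>k\<in>S. \<beta> k * X k x)"
      unfolding P using S(1) \<open>j \<notin> S\<close> by simp
    ultimately show ?thesis
      by (simp add: Y_def r_def algebra_simps)
  qed
  then have Y_resid: "affine_resid Y X S (\<delta> + \<beta> j * a) (\<lambda>k. \<beta> k + \<beta> j * b k) = (\<lambda>x. \<beta> j * r x + eps x)"
    by blast
  have "orthogonal_to_span M (\<lambda>x. \<beta> j * r x + eps x) X S"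
    using orthogonal_to_span_lincomb[OF r square_integrable_eps S(2)] orth_X
      orthogonal_eps[OF \<open>S \<subseteq> {1..p}\<close>] by (simp add: r_def)
  then have orth_Y:
      "orthogonal_to_span M (affine_resid Y X S (\<delta> + \<beta> j * a) (\<lambda>k. \<beta> k + \<beta> j * b k)) X S"
    unfolding Y_resid .
  have "pcor M Y (X j) X S = corr M (\<lambda>x. \<beta> j * r x + eps x) r"
    using pcor_eq_corr_orthogonal_resids[where W=X, OF S square_integrable_Y square_integrable_X[OF j]
        orth_Y orth_X]
    unfolding Y_resid r_def .
  also have "\<dots> \<noteq> 0"
  proof (rule corr_scaled_add_uncorrelated_neq_0[OF r square_integrable_eps _ eps_mean])
    show "(\<integral>x. r x \<partial>M) = 0"
      using orth_X by (simp add: orthogonal_to_span_def r_def)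
    then show "(\<integral>x. (r x)\<^sup>2 \<partial>M) > 0"
      unfolding r_def S_def by (rule integral_square_affine_resid_pos[OF j])
    show "(\<integral>x. eps x * r x \<partial>M) = 0"
      unfolding r_def by (rule integral_eps_mult_affine_resid[OF \<open>S \<subseteq> {1..p}\<close> j])
  qed fact
  finally show ?thesis
    by (simp add: S_def)
qed

lemma corr_eq_pcor_empty: "j \<in> {1..p} \<Longrightarrow> corr M Y (X j) = pcor M Y (X j) X {}"
  using pcor_empty_eq_corr[OF square_integrable_Y square_integrable_X] by simp

end

theorem theorem3:
  fixes M :: "'a measure" and X :: "nat \<Rightarrow> 'a \<Rightarrow> real" and eps Y :: "'a \<Rightarrow> real"
    and p :: nat and \<delta> :: real and \<beta> :: "nat \<Rightarrow> real"
  assumes "prob_space M"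
    and X_meas: "\<And>j. j \<in> {1..p} \<Longrightarrow> X j \<in> borel_measurable M"
    and X_sq: "\<And>j. j \<in> {1..p} \<Longrightarrow> integrable M (\<lambda>\<omega>. (X j \<omega>)\<^sup>2)"
    and pos_def: "\<And>c :: nat \<Rightarrow> real. (\<exists>j\<in>{1..p}. c j \<noteq> 0) \<Longrightarrow>
        (\<Sum>j\<in>{1..p}. \<Sum>k\<in>{1..p}. c j * c k * covar M (X j) (X k)) > 0"
    and eps_meas: "eps \<in> borel_measurable M"
    and eps_sq: "integrable M (\<lambda>\<omega>. (eps \<omega>)\<^sup>2)"
    and eps_mean: "(\<integral>\<omega>. eps \<omega> \<partial>M) = 0"
    and eps_var: "covar M eps eps > 0"
    and uncorr: "\<And>j. j \<in> {1..p} \<Longrightarrow> covar M eps (X j) = 0"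
    and Y_def: "\<And>\<omega>. Y \<omega> = \<delta> + (\<Sum>j\<in>{1..p}. \<beta> j * X j \<omega>) + eps \<omega>"
    and faithful: "partially_faithful M Y X p"
  shows "pc_A M Y X p (m_reach M Y X p) = {j\<in>{1..p}. \<beta> j \<noteq> 0}"
proof -
  interpret linear_model M X eps Y p \<delta> \<beta>
    by (intro linear_model.intro linear_model_axioms.intro) (fact assms)+
  have "pc_active_set M Y X p active"
    using active_subset faithful corr_eq_pcor_empty pcor_inactive[OF subset_refl active_subset]
      pcor_active
    by unfold_locales auto
  then show ?thesis
    unfolding active_def by (rule pc_active_set.pc_A_m_reach)
qed

end
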